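(* Let $T$ be a complete dependent (NIP) first-order theory with monster model $\mathfrak{C}$, $\zeta$ an ordinal, $n_* <\omega$, and for $n<n_*$ let $\varphi_n(\bar x_{[\zeta]},\bar y_n)$ be a formula. Let $\mathcal{D}$ be a proper filter on a set $I$ and $\bar a_t \in {}^\zeta\mathfrak{C}$ for $t\in I$. Then there are $k_*<\omega$ and a partition $\langle \mathcal{S}_k : k<k_*\rangle$ of $I$ such that: (a) $\mathcal{S}_k \in \mathcal{D}^+$ for each $k<k_*$; (b) for every $\ell<n_*$ and every $\bar b \in {}^{\ell g(\bar y_\ell)}\mathfrak{C}$ there are $k<k_*$ and a truth value $\mathbf t$ such that $\{t\in\mathcal{S}_k : \mathfrak{C}\models \varphi_\ell[\bar a_t,\bar b]^{\mathbf t}\} = \mathcal{S}_k \bmod \mathcal{D}$.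
   Context: $\bar x_{[\zeta]} = \langle x_i : i<\zeta\rangle$ (a formula uses only finitely many of these variables). $\mathcal{D}^+$ is the set of subsets of $I$ meeting every member of $\mathcal{D}$. For $X, Y \subseteq I$, "$X = Y \bmod \mathcal{D}$" means the symmetric difference of $X$ and $Y$ is disjoint from some member of $\mathcal{D}$. $\varphi^{\mathbf t}$ is $\varphi$ if $\mathbf t$ is true and $\neg\varphi$ otherwise. *)

theory Defs
  imports Main
begin

text \<open>Symbols are applied to argument lists (arity is not enforced;
this is a harmless generalisation of a first-order vocabulary).\<close>

datatype ('f, 'v) trm = Var 'v | Fn 'f "('f, 'v) trm list"

datatype ('f, 'r, 'v) fm =
    Eq "('f, 'v) trm" "('f, 'v) trm"
  | Rel 'r "('f, 'v) trm list"
  | Neg "('f, 'r, 'v) fm"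
  | Conj "('f, 'r, 'v) fm" "('f, 'r, 'v) fm"
  | Ex 'v "('f, 'r, 'v) fm"

text \<open>A structure with universe the whole type 'm: interpretations of the
function and relation symbols.\<close>

record ('f, 'r, 'm) struct =
  fn_int :: "'f \<Rightarrow> 'm list \<Rightarrow> 'm"
  rel_int :: "'r \<Rightarrow> 'm list \<Rightarrow> bool"

fun teval :: "('f, 'r, 'm) struct \<Rightarrow> ('v \<Rightarrow> 'm) \<Rightarrow> ('f, 'v) trm \<Rightarrow> 'm" where
  "teval M e (Var v) = e v"
| "teval M e (Fn f ts) = fn_int M f (map (teval M e) ts)"

fun sat :: "('f, 'r, 'm) struct \<Rightarrow> ('f, 'r, 'v) fm \<Rightarrow> ('v \<Rightarrow> 'm) \<Rightarrow> bool" where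
  "sat M (Eq s t) e = (teval M e s = teval M e t)"
| "sat M (Rel r ts) e = rel_int M r (map (teval M e) ts)"
| "sat M (Neg \<phi>) e = (\<not> sat M \<phi> e)"
| "sat M (Conj \<phi> \<psi>) e = (sat M \<phi> e \<and> sat M \<psi> e)"
| "sat M (Ex v \<phi>) e = (\<exists>m. sat M \<phi> (e(v := m)))"

definition merge :: "'v set \<Rightarrow> ('v \<Rightarrow> 'm) \<Rightarrow> ('v \<Rightarrow> 'm) \<Rightarrow> 'v \<Rightarrow> 'm" where
  "merge X a e v = (if v \<in> X then a v else e v)"

text \<open>Since this is
expressible by a sentence for each n, it is a property of the complete
theory Th(M), and it coincides with the usual notion in the monster model.\<close>

definition has_IP :: "('f, 'r, 'm) struct \<Rightarrow> ('f, 'r, nat) fm \<Rightarrow> nat set \<Rightarrow> bool" where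
  "has_IP M \<psi> X = (\<forall>n. \<exists>A :: nat \<Rightarrow> nat \<Rightarrow> 'm. \<forall>S \<subseteq> {..<n}. \<exists>e :: nat \<Rightarrow> 'm.
       \<forall>i<n. (sat M \<psi> (merge X (A i) e) \<longleftrightarrow> i \<in> S))"

definition dependent :: "('f, 'r, 'm) struct \<Rightarrow> bool" where
  "dependent M = (\<forall>\<psi> X. \<not> has_IP M \<psi> X)"

text \<open>A filter on the set I is represented by a HOL filter D on the type 't
(I = UNIV); it is proper iff D \<noteq> bot.\<close>

definition in_filter :: "'t filter \<Rightarrow> 't set \<Rightarrow> bool" where
  "in_filter D X = eventually (\<lambda>t. t \<in> X) D"

definition pos_set :: "'t filter \<Rightarrow> 't set \<Rightarrow> bool" where
  "pos_set D X = (\<forall>Y. in_filter D Y \<longrightarrow> X \<inter> Y \<noteq> {})"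

definition eq_mod :: "'t filter \<Rightarrow> 't set \<Rightarrow> 't set \<Rightarrow> bool" where
  "eq_mod D X Y = (\<exists>Z. in_filter D Z \<and> ((X - Y) \<union> (Y - X)) \<inter> Z = {})"

definition asg :: "('i \<Rightarrow> 'm) \<Rightarrow> (nat \<Rightarrow> 'm) \<Rightarrow> 'i + nat \<Rightarrow> 'm" where
  "asg a b v = (case v of Inl i \<Rightarrow> a i | Inr j \<Rightarrow> b j)"

end

theory Submission
  imports Defs
begin

text \<open>Call a cell S of a partition of I into D-positive sets
  decisive for X if S \<inter> X or S - X is not D-positive; then one of the truth
  values is attained on S only on a D-null set, which is clause (b).  Starting
  from the trivial partition {I} we treat the formulas one by one.  If some
  instance X = {t. \<phi>(a_t, b)} is decided by no cell, every cell can be split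
  along X into two D-positive halves.  Were this possible forever, after N
  splits along X_0, ..., X_{N-1} every Boolean combination of the X_j would
  contain a whole (nonempty) cell, so the instances of \<phi> would shatter
  arbitrarily long sequences of sets: \<phi>, read with the roles of the
  parameters and the elements a_t exchanged, would have the independence
  property.  After renaming the variables of \<phi> into nat this contradicts
  dependence of M.  Refining keeps earlier decisions, so induction over the
  formulas yields one partition that works for all of them.\<close>

fun trename :: "('v \<Rightarrow> 'w) \<Rightarrow> ('f, 'v) trm \<Rightarrow> ('f, 'w) trm" where
  "trename g (Var v) = Var (g v)"
| "trename g (Fn f ts) = Fn f (map (trename g) ts)"

fun tvars :: "('f, 'v) trm \<Rightarrow> 'v set" where
  "tvars (Var v) = {v}"
| "tvars (Fn f ts) = \<Union>(set (map tvars ts))"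

fun frename :: "('v \<Rightarrow> 'w) \<Rightarrow> ('f, 'r, 'v) fm \<Rightarrow> ('f, 'r, 'w) fm" where
  "frename g (Eq s t) = Eq (trename g s) (trename g t)"
| "frename g (Rel r ts) = Rel r (map (trename g) ts)"
| "frename g (Neg p) = Neg (frename g p)"
| "frename g (Conj p q) = Conj (frename g p) (frename g q)"
| "frename g (Ex v p) = Ex (g v) (frename g p)"

text \<open>All variables occurring in a formula (free or bound); a superset of the
  free variables is all the coincidence and renaming lemmas need.\<close>

fun fvars :: "('f, 'r, 'v) fm \<Rightarrow> 'v set" where
  "fvars (Eq s t) = tvars s \<union> tvars t"
| "fvars (Rel r ts) = \<Union>(set (map tvars ts))"
| "fvars (Neg p) = fvars p"
| "fvars (Conj p q) = fvars p \<union> fvars q"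
| "fvars (Ex v p) = insert v (fvars p)"

lemma finite_tvars: "finite (tvars t)"
  by (induction t) auto

lemma finite_fvars: "finite (fvars p)"
  by (induction p) (auto simp: finite_tvars)

lemma teval_rename: "teval M e (trename g t) = teval M (e \<circ> g) t"
  by (induction t) (auto cong: map_cong)

lemma teval_cong: "(\<forall>v\<in>tvars t. e v = e' v) \<Longrightarrow> teval M e t = teval M e' t"
  by (induction t) (auto cong: map_cong)

lemma sat_cong: "(\<forall>v\<in>fvars p. e v = e' v) \<Longrightarrow> sat M p e = sat M p e'"
proof (induction p arbitrary: e e')
  case (Eq s t)
  then show ?case using teval_cong[of s e e' M] teval_cong[of t e e' M] by auto
next
  case (Rel r ts)
  then have "map (teval M e) ts = map (teval M e') ts"
    by (auto intro!: teval_cong)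
  then show ?case by (simp del: map_eq_conv)
next
  case (Conj p q)
  then show ?case by (metis Un_iff fvars.simps(4) sat.simps(4))
next
  case (Ex v p)
  then have "\<And>m. sat M p (e(v := m)) = sat M p (e'(v := m))"
    by (intro Ex.IH) auto
  then show ?case by simp
qed auto

lemma sat_rename: "inj_on g (fvars p) \<Longrightarrow> sat M (frename g p) e = sat M p (e \<circ> g)"
proof (induction p arbitrary: e)
  case (Rel r ts)
  then show ?case by (simp add: teval_rename comp_def)
next
  case (Ex v p)
  have "sat M (frename g p) (e(g v := m)) = sat M p ((e \<circ> g)(v := m))" for m
  proof -
    have "sat M (frename g p) (e(g v := m)) = sat M p (e(g v := m) \<circ> g)"
      using Ex by (intro Ex.IH) (auto intro: inj_on_subset)
    also have "\<dots> = sat M p ((e \<circ> g)(v := m))"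
      using Ex.prems by (intro sat_cong) (auto simp: inj_on_def)
    finally show ?thesis .
  qed
  then show ?case by (simp add: comp_def)
qed (auto simp: teval_rename inj_on_Un)

text \<open>Every formula in variables 'i + nat can be rewritten with nat variables,
  the parameter variables Inr j becoming the even numbers 2j.  This is the form
  in which the independence property (has_IP) is phrased.\<close>

lemma nat_variable_form:
  fixes \<phi> :: "('f, 'r, 'i + nat) fm"
  obtains \<psi> :: "('f, 'r, nat) fm" and E :: "('i \<Rightarrow> 'm) \<Rightarrow> nat \<Rightarrow> 'm"
  where "\<And>x b. sat M \<psi> (merge {v. even v} (\<lambda>v. b (v div 2)) (E x)) = sat M \<phi> (asg x b)"
proof -
  define Vi where "Vi = Inl -` fvars \<phi>"
  have "finite Vi"
    unfolding Vi_def using finite_fvars by (rule finite_vimageI) simp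
  then obtain h :: "'i \<Rightarrow> nat" where h: "inj_on h Vi"
    using finite_imp_inj_to_nat_seg by blast
  define g where "g v = (case v of Inl i \<Rightarrow> 2 * h i + 1 | Inr j \<Rightarrow> 2 * j)" for v
  have g_parity: "g (Inl i) \<noteq> g (Inr j)" for i j
    unfolding g_def by simp presburger
  have "inj_on g (fvars \<phi>)"
  proof (rule inj_onI)
    fix u v assume u: "u \<in> fvars \<phi>" and v: "v \<in> fvars \<phi>" and eq: "g u = g v"
    show "u = v"
    proof (cases u; cases v)
      fix i i' assume "u = Inl i" "v = Inl i'"
      with u v eq h show "u = v" by (simp add: g_def Vi_def inj_on_def)
    next
      fix i j assume "u = Inl i" "v = Inr j"
      with eq g_parity show "u = v" by blast
    next
      fix j i assume "u = Inr j" "v = Inl i"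
      with eq g_parity show "u = v" by metis
    next
      fix j j' assume "u = Inr j" "v = Inr j'"
      with eq show "u = v" by (simp add: g_def)
    qed
  qed
  define E :: "('i \<Rightarrow> 'm) \<Rightarrow> nat \<Rightarrow> 'm" where "E x v = x (inv_into Vi h (v div 2))" for x v
  have "sat M (frename g \<phi>) (merge {v. even v} (\<lambda>v. b (v div 2)) (E x)) = sat M \<phi> (asg x b)"
    for x b
  proof -
    let ?e = "merge {v. even v} (\<lambda>v. b (v div 2)) (E x)"
    have "sat M (frename g \<phi>) ?e = sat M \<phi> (?e \<circ> g)"
      using \<open>inj_on g (fvars \<phi>)\<close> by (rule sat_rename)
    also have "\<dots> = sat M \<phi> (asg x b)"
    proof (rule sat_cong, rule ballI)
      fix v assume "v \<in> fvars \<phi>"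
      with h show "(?e \<circ> g) v = asg x b v"
        by (cases v) (simp_all add: merge_def g_def E_def asg_def Vi_def)
    qed
    finally show ?thesis .
  qed
  then show ?thesis using that by blast
qed

section \<open>Partitions into D-positive cells\<close>

lemma pos_mono: "pos_set D A \<Longrightarrow> A \<subseteq> B \<Longrightarrow> pos_set D B"
  unfolding pos_set_def by blast

text \<open>Positive sets are nonempty, since I itself belongs to D.\<close>

lemma pos_nonempty: "pos_set D A \<Longrightarrow> A \<noteq> {}"
proof -
  assume "pos_set D A"
  moreover have "in_filter D UNIV" by (simp add: in_filter_def)
  ultimately show ?thesis unfolding pos_set_def by blast
qed

lemma pos_UNIV: "D \<noteq> bot \<Longrightarrow> pos_set D UNIV"
  unfolding pos_set_def in_filter_def using eventually_False by fastforce

definition D_partition :: "'t filter \<Rightarrow> 't set set \<Rightarrow> bool" where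
  "D_partition D P \<longleftrightarrow> finite P \<and> \<Union>P = UNIV \<and>
     (\<forall>S\<in>P. \<forall>S'\<in>P. S \<noteq> S' \<longrightarrow> S \<inter> S' = {}) \<and> (\<forall>S\<in>P. pos_set D S)"

definition refines :: "'t set set \<Rightarrow> 't set set \<Rightarrow> bool" where
  "refines Q P \<longleftrightarrow> (\<forall>S\<in>Q. \<exists>S'\<in>P. S \<subseteq> S')"

definition decides :: "'t filter \<Rightarrow> 't set \<Rightarrow> 't set \<Rightarrow> bool" where
  "decides D S X \<longleftrightarrow> \<not> pos_set D (S \<inter> X) \<or> \<not> pos_set D (S - X)"

text \<open>A decisive cell is exactly what clause (b) of the theorem asks for.\<close>

lemma decides_eq_mod:
  assumes "decides D S X"
  shows "\<exists>tv. eq_mod D {t \<in> S. (t \<in> X) = tv} S"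
proof (cases "pos_set D (S - X)")
  case True
  with assms obtain Y where "in_filter D Y" "S \<inter> X \<inter> Y = {}"
    unfolding decides_def pos_set_def by auto
  then have "eq_mod D {t \<in> S. (t \<in> X) = False} S"
    unfolding eq_mod_def by (intro exI[of _ Y]) auto
  then show ?thesis by blast
next
  case False
  then obtain Y where "in_filter D Y" "(S - X) \<inter> Y = {}"
    unfolding pos_set_def by auto
  then have "eq_mod D {t \<in> S. (t \<in> X) = True} S"
    unfolding eq_mod_def by (intro exI[of _ Y]) auto
  then show ?thesis by blast
qed

text \<open>Decisions survive refinement: a subcell of a decisive cell is decisive,
  and every cell of P contains some cell of a refinement.\<close>

lemma decides_refine:
  assumes "D_partition D P" "D_partition D Q" "refines Q P"
    and "S \<in> P" "decides D S X"
  shows "\<exists>S'\<in>Q. decides D S' X"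
proof -
  have "pos_set D S"
    using assms(1,4) unfolding D_partition_def by blast
  then obtain t where t: "t \<in> S"
    using pos_nonempty by blast
  have "t \<in> \<Union>Q"
    using assms(2) unfolding D_partition_def by simp
  then obtain S' where S': "S' \<in> Q" "t \<in> S'"
    by blast
  then obtain S'' where S'': "S'' \<in> P" "S' \<subseteq> S''"
    using assms(3) unfolding refines_def by blast
  have disjoint: "\<forall>A\<in>P. \<forall>B\<in>P. A \<noteq> B \<longrightarrow> A \<inter> B = {}"
    using assms(1) unfolding D_partition_def by blast
  have "t \<in> S'' \<inter> S"
    using t S'(2) S''(2) by blast
  then have "S'' = S"
    using disjoint S''(1) assms(4) by blast
  then have "S' \<inter> X \<subseteq> S \<inter> X" "S' - X \<subseteq> S - X"
    using S''(2) by auto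
  then have "decides D S' X"
    using assms(5) pos_mono[of D "S' \<inter> X"] pos_mono[of D "S' - X"]
    unfolding decides_def by blast
  with S'(1) show ?thesis by blast
qed

definition split_by :: "'t set \<Rightarrow> 't set set \<Rightarrow> 't set set" where
  "split_by X P = (\<lambda>S. S \<inter> X) ` P \<union> (\<lambda>S. S - X) ` P"

lemma refines_split_by: "refines (split_by X P) P"
  unfolding refines_def split_by_def by auto

lemma D_partition_split_by:
  assumes "D_partition D P" "\<forall>S\<in>P. \<not> decides D S X"
  shows "D_partition D (split_by X P)"
proof -
  have "\<Union>(split_by X P) = \<Union>P"
    unfolding split_by_def by auto
  then have cover: "\<Union>(split_by X P) = UNIV"
    using assms(1) unfolding D_partition_def by simp
  have finite: "finite (split_by X P)"
    using assms(1) unfolding D_partition_def split_by_def by simp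
  have disjoint: "\<forall>A\<in>split_by X P. \<forall>B\<in>split_by X P. A \<noteq> B \<longrightarrow> A \<inter> B = {}"
  proof (intro ballI impI)
    fix A B assume "A \<in> split_by X P" "B \<in> split_by X P" "A \<noteq> B"
    then obtain S S' where "S \<in> P" "S' \<in> P"
      "A = S \<inter> X \<or> A = S - X" "B = S' \<inter> X \<or> B = S' - X" "A \<noteq> B"
      unfolding split_by_def by blast
    moreover have "\<forall>S\<in>P. \<forall>S'\<in>P. S \<noteq> S' \<longrightarrow> S \<inter> S' = {}"
      using assms(1) unfolding D_partition_def by blast
    ultimately show "A \<inter> B = {}"
      by (cases "S = S'") auto
  qed
  have positive: "\<forall>A\<in>split_by X P. pos_set D A"
    using assms(2) unfolding split_by_def decides_def by blast
  show ?thesis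
    unfolding D_partition_def using cover finite disjoint positive by blast
qed

section \<open>Splitting must stop for families of finite dual VC-dimension\<close>

definition shatters :: "'t set list \<Rightarrow> bool" where
  "shatters Xs \<longleftrightarrow> (\<forall>\<sigma>::nat \<Rightarrow> bool. \<exists>t. \<forall>j<length Xs. (t \<in> Xs ! j) = \<sigma> j)"

definition finite_VC :: "'t set set \<Rightarrow> bool" where
  "finite_VC F \<longleftrightarrow> (\<exists>N. \<forall>Xs. length Xs = N \<and> set Xs \<subseteq> F \<longrightarrow> \<not> shatters Xs)"

definition cells_realize :: "'t set set \<Rightarrow> 't set list \<Rightarrow> bool" where
  "cells_realize Q Xs \<longleftrightarrow>
     (\<forall>\<sigma>::nat \<Rightarrow> bool. \<exists>S\<in>Q. \<forall>t\<in>S. \<forall>j<length Xs. (t \<in> Xs ! j) = \<sigma> j)"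

lemma cells_realize_split_by:
  assumes "cells_realize Q Xs"
  shows "cells_realize (split_by X Q) (Xs @ [X])"
  unfolding cells_realize_def
proof
  fix \<sigma> :: "nat \<Rightarrow> bool"
  obtain S where S: "S \<in> Q" "\<forall>t\<in>S. \<forall>j<length Xs. (t \<in> Xs ! j) = \<sigma> j"
    using assms unfolding cells_realize_def by blast
  define S' where "S' = (if \<sigma> (length Xs) then S \<inter> X else S - X)"
  have "S' \<in> split_by X Q"
    using S(1) unfolding S'_def split_by_def by auto
  moreover have "(t \<in> (Xs @ [X]) ! j) = \<sigma> j" if "t \<in> S'" "j < length (Xs @ [X])" for t j
    using that S(2) unfolding S'_def
    by (cases "j < length Xs") (auto simp: nth_append less_Suc_eq split: if_splits)
  ultimately show "\<exists>S\<in>split_by X Q. \<forall>t\<in>S. \<forall>j<length (Xs @ [X]). (t \<in> (Xs @ [X]) ! j) = \<sigma> j"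
    by blast
qed

text \<open>Cells of a D-partition are nonempty, so cell-wise realization is shattering.\<close>

lemma cells_realize_shatters:
  assumes "D_partition D Q" "cells_realize Q Xs"
  shows "shatters Xs"
  using assms pos_nonempty unfolding D_partition_def cells_realize_def shatters_def
  by (metis all_not_in_conv)

text \<open>Otherwise N forced
  splits produce N members of F realized cell-wise, hence shattered.\<close>

lemma refinement_deciding_family:
  assumes F: "finite_VC F" and P: "D_partition D P"
  shows "\<exists>Q. D_partition D Q \<and> refines Q P \<and> (\<forall>X\<in>F. \<exists>S\<in>Q. decides D S X)"
proof (rule ccontr)
  assume stuck: "\<not> ?thesis"
  have "\<exists>Xs Q. length Xs = N \<and> set Xs \<subseteq> F \<and> D_partition D Q \<and> refines Q P \<and>
      cells_realize Q Xs" for N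
  proof (induction N)
    case 0
    have "P \<noteq> {}" using P unfolding D_partition_def by auto
    with P show ?case
      by (intro exI[of _ "[]"] exI[of _ P]) (auto simp: refines_def cells_realize_def)
  next
    case (Suc N)
    then obtain Xs Q where IH: "length Xs = N" "set Xs \<subseteq> F" "D_partition D Q"
        "refines Q P" "cells_realize Q Xs" by blast
    with stuck obtain X where X: "X \<in> F" "\<forall>S\<in>Q. \<not> decides D S X" by blast
    have "D_partition D (split_by X Q)"
      using IH(3) X(2) by (rule D_partition_split_by)
    moreover have "refines (split_by X Q) P"
      using IH(4) refines_split_by unfolding refines_def by (meson order_trans)
    moreover have "cells_realize (split_by X Q) (Xs @ [X])"
      using IH(5) by (rule cells_realize_split_by)
    ultimately show ?case
      using IH(1,2) X(1) by (intro exI[of _ "Xs @ [X]"] exI[of _ "split_by X Q"]) auto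
  qed
  then have "\<exists>Xs. length Xs = N \<and> set Xs \<subseteq> F \<and> shatters Xs" for N
    by (meson cells_realize_shatters)
  with F show False unfolding finite_VC_def by blast
qed

section \<open>Definable families in dependent structures\<close>

text \<open>The instances {t. \<phi>(a_t, b)} of one formula have finite dual VC-dimension:
  shattering N of them with parameters b_0, ..., b_{N-1} means that the
  parameter tuples b_j are shattered by the instances of \<phi> with x := a_t,
  i.e. the nat-variable form of \<phi> has the independence property.\<close>

lemma dependent_finite_VC:
  fixes M :: "('f, 'r, 'm) struct" and \<phi> :: "('f, 'r, 'i + nat) fm"
    and a :: "'t \<Rightarrow> 'i \<Rightarrow> 'm"
  assumes "dependent M"
  shows "finite_VC {{t. sat M \<phi> (asg (a t) b)} | b. True}"
proof (rule ccontr)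
  let ?F = "{{t. sat M \<phi> (asg (a t) b)} | b. True}"
  assume "\<not> finite_VC ?F"
  then have long: "\<exists>Xs. length Xs = N \<and> set Xs \<subseteq> ?F \<and> shatters Xs" for N
    unfolding finite_VC_def by blast
  obtain \<psi> :: "('f, 'r, nat) fm" and E where \<psi>:
    "\<And>x b. sat M \<psi> (merge {v. even v} (\<lambda>v. b (v div 2)) (E x)) = sat M \<phi> (asg x b)"
    using nat_variable_form by blast
  have "has_IP M \<psi> {v. even v}"
    unfolding has_IP_def
  proof
    fix N
    obtain Xs where Xs: "length Xs = N" "set Xs \<subseteq> ?F" "shatters Xs"
      using long[of N] by blast
    have "\<exists>b. Xs ! j = {t. sat M \<phi> (asg (a t) b)}" if "j < N" for j
      using that Xs(1,2) nth_mem by blast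
    then obtain B where B: "\<And>j. j < N \<Longrightarrow> Xs ! j = {t. sat M \<phi> (asg (a t) (B j))}"
      by metis
    show "\<exists>A. \<forall>S\<subseteq>{..<N}. \<exists>e. \<forall>j<N. sat M \<psi> (merge {v. even v} (A j) e) \<longleftrightarrow> j \<in> S"
    proof (intro exI[of _ "\<lambda>j v. B j (v div 2)"] allI impI)
      fix S :: "nat set"
      obtain t where t: "\<forall>j<N. (t \<in> Xs ! j) = (j \<in> S)"
        using spec[OF Xs(3)[unfolded shatters_def], of "\<lambda>j. j \<in> S"] Xs(1) by blast
      have "sat M \<psi> (merge {v. even v} (\<lambda>v. B j (v div 2)) (E (a t))) \<longleftrightarrow> j \<in> S"
        if "j < N" for j
        using that \<psi> B t by simp
      then show "\<exists>e. \<forall>j<N. sat M \<psi> (merge {v. even v} (\<lambda>v. B j (v div 2)) e) \<longleftrightarrow> j \<in> S"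
        by blast
    qed
  qed
  with assms show False unfolding dependent_def by blast
qed

lemma partition_deciding_formulas:
  fixes M :: "('f, 'r, 'm) struct" and \<phi> :: "nat \<Rightarrow> ('f, 'r, 'i + nat) fm"
    and D :: "'t filter" and a :: "'t \<Rightarrow> 'i \<Rightarrow> 'm"
  assumes dep: "dependent M" and D: "D \<noteq> bot"
  shows "\<exists>P. D_partition D P \<and>
           (\<forall>l<n. \<forall>b. \<exists>S\<in>P. decides D S {t. sat M (\<phi> l) (asg (a t) b)})"
proof (induction n)
  case 0
  have "D_partition D {UNIV}"
    unfolding D_partition_def using pos_UNIV[OF D] by simp
  then show ?case by blast
next
  case (Suc n)
  then obtain P where P: "D_partition D P"
    "\<forall>l<n. \<forall>b. \<exists>S\<in>P. decides D S {t. sat M (\<phi> l) (asg (a t) b)}" by blast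
  obtain Q where Q: "D_partition D Q" "refines Q P"
    "\<forall>b. \<exists>S\<in>Q. decides D S {t. sat M (\<phi> n) (asg (a t) b)}"
    using refinement_deciding_family[OF dependent_finite_VC[OF dep] P(1)] by blast
  have "\<exists>S\<in>Q. decides D S {t. sat M (\<phi> l) (asg (a t) b)}" if l: "l < Suc n" for l b
  proof (cases "l < n")
    case True
    then obtain S where "S \<in> P" "decides D S {t. sat M (\<phi> l) (asg (a t) b)}"
      using P(2) by blast
    then show ?thesis
      using decides_refine[OF P(1) Q(1,2)] by blast
  next
    case False
    with l have "l = n" by simp
    then show ?thesis using Q(3) by blast
  qed
  with Q(1) show ?case by blast
qed

lemma enumerate_partition:
  assumes "D_partition D P"
  obtains k :: nat and S :: "nat \<Rightarrow> 't set"
  where "\<forall>i<k. \<forall>j<k. i \<noteq> j \<longrightarrow> S i \<inter> S j = {}" "(\<Union>i<k. S i) = UNIV"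
    "\<forall>i<k. pos_set D (S i)" "\<And>A. A \<in> P \<Longrightarrow> \<exists>i<k. S i = A"
proof -
  have "finite P"
    using assms unfolding D_partition_def by simp
  then obtain xs where xs: "set xs = P" "distinct xs"
    using finite_distinct_list by blast
  have image: "(!) xs ` {..<length xs} = P"
    using nth_image[of "length xs" xs] xs(1) by (simp add: atLeast0LessThan)
  then have listed: "\<exists>i<length xs. xs ! i = A" if "A \<in> P" for A
    using that by force
  have cover: "(\<Union>i<length xs. xs ! i) = UNIV"
    using assms image unfolding D_partition_def by simp
  have disjoint: "\<forall>i<length xs. \<forall>j<length xs. i \<noteq> j \<longrightarrow> xs ! i \<inter> xs ! j = {}"
  proof (intro allI impI)
    fix i j assume "i < length xs" "j < length xs" "i \<noteq> j"
    then have "xs ! i \<noteq> xs ! j" "xs ! i \<in> P" "xs ! j \<in> P"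
      using xs nth_eq_iff_index_eq by auto
    then show "xs ! i \<inter> xs ! j = {}"
      using assms unfolding D_partition_def by blast
  qed
  have positive: "\<forall>i<length xs. pos_set D (xs ! i)"
    using assms image unfolding D_partition_def by auto
  show ?thesis
    using disjoint cover positive listed by (rule that)
qed

theorem claim8p1:
  fixes M :: "('f, 'r, 'm) struct"
    and n_star :: nat
    and \<phi> :: "nat \<Rightarrow> ('f, 'r, 'i + nat) fm"
    and D :: "'t filter"
    and a :: "'t \<Rightarrow> 'i \<Rightarrow> 'm"
  assumes "dependent M"
    and "D \<noteq> bot"
  shows "\<exists>(k_star :: nat) (S :: nat \<Rightarrow> 't set).
           (\<forall>k<k_star. \<forall>k'<k_star. k \<noteq> k' \<longrightarrow> S k \<inter> S k' = {}) \<and>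
           (\<Union>k<k_star. S k) = UNIV \<and>
           (\<forall>k<k_star. pos_set D (S k)) \<and>
           (\<forall>l<n_star. \<forall>b :: nat \<Rightarrow> 'm. \<exists>k<k_star. \<exists>tv :: bool.
              eq_mod D {t \<in> S k. sat M (\<phi> l) (asg (a t) b) = tv} (S k))"
proof -
  obtain P where P: "D_partition D P"
    and decided: "\<forall>l<n_star. \<forall>b. \<exists>A\<in>P. decides D A {t. sat M (\<phi> l) (asg (a t) b)}"
    using partition_deciding_formulas[OF assms] by blast
  obtain k :: nat and S :: "nat \<Rightarrow> 't set"
    where S: "\<forall>i<k. \<forall>j<k. i \<noteq> j \<longrightarrow> S i \<inter> S j = {}" "(\<Union>i<k. S i) = UNIV"
      "\<forall>i<k. pos_set D (S i)" and listed: "\<And>A. A \<in> P \<Longrightarrow> \<exists>i<k. S i = A"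
    using enumerate_partition[OF P] by blast
  have decide: "\<forall>l<n_star. \<forall>b. \<exists>i<k. \<exists>tv.
      eq_mod D {t \<in> S i. sat M (\<phi> l) (asg (a t) b) = tv} (S i)"
  proof (intro allI impI)
    fix l b assume "l < n_star"
    then obtain A where "A \<in> P" and A: "decides D A {t. sat M (\<phi> l) (asg (a t) b)}"
      using decided by blast
    then obtain i where i: "i < k" "S i = A"
      using listed by blast
    obtain tv where "eq_mod D {t \<in> A. (t \<in> {t. sat M (\<phi> l) (asg (a t) b)}) = tv} A"
      using decides_eq_mod[OF A] by blast
    then have "eq_mod D {t \<in> S i. sat M (\<phi> l) (asg (a t) b) = tv} (S i)"
      using i(2) by simp
    with i(1)
    show "\<exists>i<k. \<exists>tv. eq_mod D {t \<in> S i. sat M (\<phi> l) (asg (a t) b) = tv} (S i)"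
      by blast
  qed
  show ?thesis
    by (intro exI[of _ k] exI[of _ S] conjI) (fact S decide)+
qed

end
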